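(* For every $\varphi \in \Lambda^2_+\mathbb{R}^8$ and all $k,l \in \{1,\dots,8\}$, \[2 \, P_+ \big( e_k \wedge (i_{e_l}\varphi) + e_l \wedge (i_{e_k}\varphi) \big) = \delta_{kl}\,\varphi,\] where $e_1,\dots,e_8$ is the standard orthonormal basis of $\mathbb{R}^8$ (identified with the dual basis via the Euclidean metric), $i_X$ denotes interior multiplication, and $P_+$ is the projection onto $\Lambda^2_+\mathbb{R}^8$ defined in the context.
   Context: Write $\mathbb{R}^8 = E \oplus E^\perp$ with orthonormal basis $e_1,\dots,e_4$ of $E$ and $e_1^\perp,\dots,e_4^\perp$ of $E^\perp$, and set $e_5=e_1^\perp, e_6=e_2^\perp, e_7=e_3^\perp, e_8=e_4^\perp$. The $4$-form $\Omega$ is $\Omega = -e_1 e_2 e_1^\perp e_2^\perp - e_1 e_2 e_3^\perp e_4^\perp - e_3 e_4 e_1^\perp e_2^\perp - e_3 e_4 e_3^\perp e_4^\perp + e_1 e_3 e_2^\perp e_4^\perp - e_1 e_3 e_1^\perp e_3^\perp - e_2 e_4 e_2^\perp e_4^\perp + e_2 e_4 e_1^\perp e_3^\perp - e_1 e_4 e_2^\perp e_3^\perp - e_1 e_4 e_1^\perp e_4^\perp - e_2 e_3 e_2^\perp e_3^\perp - e_2 e_3 e_1^\perp e_4^\perp + e_1 e_2 e_3 e_4 + e_1^\perp e_2^\perp e_3^\perp e_4^\perp$, where juxtaposition denotes wedge product. Let $*$ be the Euclidean Hodge star (orientation $e_1\wedge\dots\wedge e_4\wedge e_1^\perp\wedge\dots\wedge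 e_4^\perp$). Define $\Lambda^2_+\mathbb{R}^8 = \{\varphi: 3\varphi - *(\Omega\wedge\varphi)=0\}$ (dimension 7) and $\Lambda^2_-\mathbb{R}^8=\{\varphi: \varphi + *(\Omega\wedge\varphi)=0\}$ (dimension 21); then $\Lambda^2\mathbb{R}^8=\Lambda^2_+\oplus\Lambda^2_-$ and the projection onto $\Lambda^2_+$ is $P_+\varphi = \frac14(\varphi + *(\Omega\wedge\varphi))$. *)

theory Defs
  imports Complex_Main
begin

text \<open>Exterior algebra of R^8 with standard orthonormal basis e_1..e_8 (indices 1..8).
  A form is represented by its coefficient function on index sets: the form
  a corresponds to the sum over finite S of a S times e_S, where e_S is the
  wedge of the e_i, i in S, taken in increasing order.  Genuine forms on R^8
  are supported on subsets of {1..8}.\<close>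

type_synonym form = "nat set \<Rightarrow> real"

definition is_kform :: "nat \<Rightarrow> form \<Rightarrow> bool" where
  "is_kform k a \<longleftrightarrow> (\<forall>S. a S \<noteq> 0 \<longrightarrow> S \<subseteq> {1..8} \<and> card S = k)"

text \<open>Sign of the permutation sorting the concatenation of (sorted) A and B.\<close>
definition shuffle_sign :: "nat set \<Rightarrow> nat set \<Rightarrow> real" where
  "shuffle_sign A B = (-1) ^ card {(a, b). a \<in> A \<and> b \<in> B \<and> b < a}"

definition bas :: "nat \<Rightarrow> form" where
  "bas i = (\<lambda>S. if S = {i} then 1 else 0)"

definition wedge :: "form \<Rightarrow> form \<Rightarrow> form" (infixr "\<and>\<^sub>w" 70) where
  "wedge a b = (\<lambda>S. \<Sum>A\<in>Pow S. shuffle_sign A (S - A) * a A * b (S - A))"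

definition fadd :: "form \<Rightarrow> form \<Rightarrow> form" (infixl "+\<^sub>f" 65) where
  "fadd a b = (\<lambda>S. a S + b S)"

definition fsub :: "form \<Rightarrow> form \<Rightarrow> form" (infixl "-\<^sub>f" 65) where
  "fsub a b = (\<lambda>S. a S - b S)"

definition fscale :: "real \<Rightarrow> form \<Rightarrow> form" (infixr "*\<^sub>f" 75) where
  "fscale c a = (\<lambda>S. c * a S)"

definition fzero :: form where
  "fzero = (\<lambda>S. 0)"

text \<open>Euclidean Hodge star, orientation e_1 ^ ... ^ e_8:
  star e_S = shuffle_sign S S^c e_{S^c}.\<close>
definition hodge :: "form \<Rightarrow> form" where
  "hodge a = (\<lambda>T. if T \<subseteq> {1..8} then shuffle_sign ({1..8} - T) T * a ({1..8} - T) else 0)"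

definition interior :: "nat \<Rightarrow> form \<Rightarrow> form" where
  "interior l a = (\<lambda>T. if l \<notin> T then (-1) ^ card {t \<in> T. t < l} * a (insert l T) else 0)"

text \<open>The 4-form Omega, with e_5,...,e_8 = e_1^perp,...,e_4^perp.\<close>
definition mono4 :: "nat \<Rightarrow> nat \<Rightarrow> nat \<Rightarrow> nat \<Rightarrow> form" where
  "mono4 a b c d = bas a \<and>\<^sub>w bas b \<and>\<^sub>w bas c \<and>\<^sub>w bas d"

definition Omega :: form where
  "Omega =
     (-1) *\<^sub>f mono4 1 2 5 6 -\<^sub>f mono4 1 2 7 8 -\<^sub>f mono4 3 4 5 6 -\<^sub>f mono4 3 4 7 8
     +\<^sub>f mono4 1 3 6 8 -\<^sub>f mono4 1 3 5 7 -\<^sub>f mono4 2 4 6 8 +\<^sub>f mono4 2 4 5 7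
     -\<^sub>f mono4 1 4 6 7 -\<^sub>f mono4 1 4 5 8 -\<^sub>f mono4 2 3 6 7 -\<^sub>f mono4 2 3 5 8
     +\<^sub>f mono4 1 2 3 4 +\<^sub>f mono4 5 6 7 8"

definition Lambda2_plus :: "form set" where
  "Lambda2_plus = {\<phi>. is_kform 2 \<phi> \<and> (3 *\<^sub>f \<phi>) -\<^sub>f hodge (Omega \<and>\<^sub>w \<phi>) = fzero}"

definition Pplus :: "form \<Rightarrow> form" where
  "Pplus \<phi> = (1/4) *\<^sub>f (\<phi> +\<^sub>f hodge (Omega \<and>\<^sub>w \<phi>))"

end

(*
  The operator  psi |-> *(Omega ^ psi)  on 2-forms splits the 28 basis forms e_ij into seven
  blocks of four (e_12, e_34, e_56, e_78 and six others) and acts on each block by a signed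
  4 x 4 matrix whose eigenvalue 3 is simple.  So a form in Lambda^2_+ is determined by its
  seven coefficients phi_1m, all other coefficients being +-phi_1m.  Wedging and contracting
  with basis vectors, and P_+, preserve degree, so both sides of the identity are 2-forms and
  it suffices to compare their coefficients at each e_ij, i < j.  Expressed through the phi_1m
  this becomes a finite check over i, j, k and l.
*)
theory Submission
  imports Defs
begin

definition monomial :: "nat set \<Rightarrow> real \<Rightarrow> form" where
  "monomial A c = (\<lambda>T. if T = A then c else 0)"

lemma bas_eq_monomial: "bas i = monomial {i} 1"
  unfolding bas_def monomial_def by simp

lemma shuffle_sign_eq_sum:
  assumes "finite A" "finite B"
  shows "shuffle_sign A B = (-1) ^ (\<Sum>a\<in>A. \<Sum>b\<in>B. if b < a then 1 else 0)"
proof -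
  have "{(a, b). a \<in> A \<and> b \<in> B \<and> b < a} = Sigma A (\<lambda>a. {b\<in>B. b < a})" by auto
  moreover have "card {b\<in>B. b < a} = (\<Sum>b\<in>B. if b < a then 1 else 0)" for a
    using assms by (simp add: sum.If_cases Int_def conj_commute)
  ultimately show ?thesis unfolding shuffle_sign_def using assms by simp
qed

lemma shuffle_sign_singleton_below:
  assumes "\<forall>b\<in>B. a < b"
  shows "shuffle_sign {a} B = 1"
proof -
  have "{(x, b). x \<in> {a} \<and> b \<in> B \<and> b < x} = {}" using assms by auto
  then show ?thesis unfolding shuffle_sign_def by (simp only: card.empty power_0)
qed

lemma wedge_fadd_left: "((a +\<^sub>f b) \<and>\<^sub>w c) S = (a \<and>\<^sub>w c) S + (b \<and>\<^sub>w c) S"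
  unfolding wedge_def fadd_def by (simp add: algebra_simps sum.distrib)

lemma wedge_fsub_left: "((a -\<^sub>f b) \<and>\<^sub>w c) S = (a \<and>\<^sub>w c) S - (b \<and>\<^sub>w c) S"
  unfolding wedge_def fsub_def by (simp add: algebra_simps sum_subtractf)

lemma wedge_fscale_left: "((r *\<^sub>f a) \<and>\<^sub>w c) S = r * (a \<and>\<^sub>w c) S"
  unfolding wedge_def fscale_def by (simp add: algebra_simps sum_distrib_left)

lemma wedge_monomial_left:
  "(monomial A c \<and>\<^sub>w b) S =
     (if finite S \<and> A \<subseteq> S then c * shuffle_sign A (S - A) * b (S - A) else 0)"
proof (cases "finite S")
  case True
  have "(monomial A c \<and>\<^sub>w b) S =
      (\<Sum>A'\<in>Pow S. if A' = A then c * shuffle_sign A (S - A) * b (S - A) else 0)"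
    unfolding wedge_def monomial_def by (rule sum.cong) auto
  with True show ?thesis by simp
qed (simp add: wedge_def)

lemma bas_wedge_monomial:
  assumes "a \<notin> A" "finite A"
  shows "bas a \<and>\<^sub>w monomial A c = monomial (insert a A) (c * shuffle_sign {a} A)"
  unfolding fun_eq_iff bas_eq_monomial wedge_monomial_left using assms by (auto simp: monomial_def)

lemma mono4_eq_monomial:
  assumes "a < b" "b < c" "c < d"
  shows "mono4 a b c d = monomial {a, b, c, d} 1"
  using assms unfolding mono4_def bas_eq_monomial[of d]
  by (simp add: bas_wedge_monomial shuffle_sign_singleton_below)

lemma atLeastAtMost_1_8: "{1..8::nat} = {1, 2, 3, 4, 5, 6, 7, 8}"
  by auto

lemma hodge_Omega_wedge:
  shows "hodge (Omega \<and>\<^sub>w \<psi>) {1,2} = \<psi> {3,4} - \<psi> {5,6} - \<psi> {7,8}"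
    and "hodge (Omega \<and>\<^sub>w \<psi>) {3,4} = \<psi> {1,2} - \<psi> {5,6} - \<psi> {7,8}"
    and "hodge (Omega \<and>\<^sub>w \<psi>) {5,6} = - \<psi> {1,2} - \<psi> {3,4} + \<psi> {7,8}"
    and "hodge (Omega \<and>\<^sub>w \<psi>) {7,8} = - \<psi> {1,2} - \<psi> {3,4} + \<psi> {5,6}"
    and "hodge (Omega \<and>\<^sub>w \<psi>) {1,3} = - \<psi> {2,4} - \<psi> {5,7} + \<psi> {6,8}"
    and "hodge (Omega \<and>\<^sub>w \<psi>) {2,4} = - \<psi> {1,3} + \<psi> {5,7} - \<psi> {6,8}"
    and "hodge (Omega \<and>\<^sub>w \<psi>) {5,7} = - \<psi> {1,3} + \<psi> {2,4} - \<psi> {6,8}"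
    and "hodge (Omega \<and>\<^sub>w \<psi>) {6,8} = \<psi> {1,3} - \<psi> {2,4} - \<psi> {5,7}"
    and "hodge (Omega \<and>\<^sub>w \<psi>) {1,4} = \<psi> {2,3} - \<psi> {5,8} - \<psi> {6,7}"
    and "hodge (Omega \<and>\<^sub>w \<psi>) {2,3} = \<psi> {1,4} - \<psi> {5,8} - \<psi> {6,7}"
    and "hodge (Omega \<and>\<^sub>w \<psi>) {5,8} = - \<psi> {1,4} - \<psi> {2,3} + \<psi> {6,7}"
    and "hodge (Omega \<and>\<^sub>w \<psi>) {6,7} = - \<psi> {1,4} - \<psi> {2,3} + \<psi> {5,8}"
    and "hodge (Omega \<and>\<^sub>w \<psi>) {1,5} = \<psi> {2,6} + \<psi> {3,7} + \<psi> {4,8}"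
    and "hodge (Omega \<and>\<^sub>w \<psi>) {2,6} = \<psi> {1,5} + \<psi> {3,7} + \<psi> {4,8}"
    and "hodge (Omega \<and>\<^sub>w \<psi>) {3,7} = \<psi> {1,5} + \<psi> {2,6} + \<psi> {4,8}"
    and "hodge (Omega \<and>\<^sub>w \<psi>) {4,8} = \<psi> {1,5} + \<psi> {2,6} + \<psi> {3,7}"
    and "hodge (Omega \<and>\<^sub>w \<psi>) {1,6} = - \<psi> {2,5} - \<psi> {3,8} + \<psi> {4,7}"
    and "hodge (Omega \<and>\<^sub>w \<psi>) {2,5} = - \<psi> {1,6} + \<psi> {3,8} - \<psi> {4,7}"
    and "hodge (Omega \<and>\<^sub>w \<psi>) {3,8} = - \<psi> {1,6} + \<psi> {2,5} - \<psi> {4,7}"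
    and "hodge (Omega \<and>\<^sub>w \<psi>) {4,7} = \<psi> {1,6} - \<psi> {2,5} - \<psi> {3,8}"
    and "hodge (Omega \<and>\<^sub>w \<psi>) {1,7} = \<psi> {2,8} - \<psi> {3,5} - \<psi> {4,6}"
    and "hodge (Omega \<and>\<^sub>w \<psi>) {2,8} = \<psi> {1,7} - \<psi> {3,5} - \<psi> {4,6}"
    and "hodge (Omega \<and>\<^sub>w \<psi>) {3,5} = - \<psi> {1,7} - \<psi> {2,8} + \<psi> {4,6}"
    and "hodge (Omega \<and>\<^sub>w \<psi>) {4,6} = - \<psi> {1,7} - \<psi> {2,8} + \<psi> {3,5}"
    and "hodge (Omega \<and>\<^sub>w \<psi>) {1,8} = - \<psi> {2,7} + \<psi> {3,6} - \<psi> {4,5}"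
    and "hodge (Omega \<and>\<^sub>w \<psi>) {2,7} = - \<psi> {1,8} - \<psi> {3,6} + \<psi> {4,5}"
    and "hodge (Omega \<and>\<^sub>w \<psi>) {3,6} = \<psi> {1,8} - \<psi> {2,7} - \<psi> {4,5}"
    and "hodge (Omega \<and>\<^sub>w \<psi>) {4,5} = - \<psi> {1,8} + \<psi> {2,7} - \<psi> {3,6}"
  unfolding hodge_def Omega_def atLeastAtMost_1_8
  by (simp_all add: mono4_eq_monomial wedge_fadd_left wedge_fsub_left wedge_fscale_left
      wedge_monomial_left shuffle_sign_eq_sum insert_Diff_if)

lemma is_kform_fadd: "is_kform p a \<Longrightarrow> is_kform p b \<Longrightarrow> is_kform p (a +\<^sub>f b)"
  unfolding is_kform_def fadd_def by (metis add.left_neutral)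

lemma is_kform_fsub: "is_kform p a \<Longrightarrow> is_kform p b \<Longrightarrow> is_kform p (a -\<^sub>f b)"
  unfolding is_kform_def fsub_def by (metis diff_zero)

lemma is_kform_fscale: "is_kform p a \<Longrightarrow> is_kform p (c *\<^sub>f a)"
  unfolding is_kform_def fscale_def by simp

lemma is_kform_bas: "i \<in> {1..8} \<Longrightarrow> is_kform 1 (bas i)"
  unfolding is_kform_def bas_def by simp

lemma is_kform_wedge:
  assumes "is_kform p a" "is_kform q b"
  shows "is_kform (p + q) (a \<and>\<^sub>w b)"
  unfolding is_kform_def
proof (intro allI impI)
  fix S
  assume nonzero: "(a \<and>\<^sub>w b) S \<noteq> 0"
  then have "finite (Pow S)"
    unfolding wedge_def by (meson sum.infinite)
  then have "finite S" by simp
  from nonzero obtain A where "A \<in> Pow S" "shuffle_sign A (S - A) * a A * b (S - A) \<noteq> 0"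
    unfolding wedge_def by (meson sum.not_neutral_contains_not_neutral)
  then have "A \<subseteq> S" "a A \<noteq> 0" "b (S - A) \<noteq> 0"
    by auto
  with assms have "A \<subseteq> {1..8}" "S - A \<subseteq> {1..8}" "card A = p" "card (S - A) = q"
    unfolding is_kform_def by blast+
  moreover have "card (S - A) = card S - card A" "card A \<le> card S"
    using \<open>A \<subseteq> S\<close> \<open>finite S\<close> by (simp_all add: card_Diff_subset finite_subset card_mono)
  ultimately show "S \<subseteq> {1..8} \<and> card S = p + q"
    by (auto simp: Diff_subset_conv)
qed

lemma is_kform_interior:
  assumes "is_kform (Suc p) a"
  shows "is_kform p (interior l a)"
  unfolding is_kform_def
proof (intro allI impI)
  fix T
  assume "interior l a T \<noteq> 0"
  then have "l \<notin> T" "a (insert l T) \<noteq> 0"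
    unfolding interior_def by (auto split: if_splits)
  with assms have "insert l T \<subseteq> {1..8}" "card (insert l T) = Suc p"
    unfolding is_kform_def by blast+
  moreover have "finite T"
    using \<open>insert l T \<subseteq> {1..8}\<close> finite_subset by auto
  ultimately show "T \<subseteq> {1..8} \<and> card T = p"
    using \<open>l \<notin> T\<close> by simp
qed

lemma is_kform_hodge:
  assumes "is_kform p a"
  shows "is_kform (8 - p) (hodge a)"
  unfolding is_kform_def
proof (intro allI impI)
  fix T
  assume "hodge a T \<noteq> 0"
  then have "T \<subseteq> {1..8}" "a ({1..8} - T) \<noteq> 0"
    unfolding hodge_def by (auto split: if_splits)
  with assms have "card ({1..8} - T) = p"
    unfolding is_kform_def by blast
  moreover have "card T \<le> 8"
    using card_mono[OF _ \<open>T \<subseteq> {1..8}\<close>] by simp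
  ultimately show "T \<subseteq> {1..8} \<and> card T = 8 - p"
    using \<open>T \<subseteq> {1..8}\<close> by (simp add: card_Diff_subset finite_subset)
qed

lemma is_kform_mono4:
  assumes "a \<in> {1..8}" "b \<in> {1..8}" "c \<in> {1..8}" "d \<in> {1..8}"
  shows "is_kform 4 (mono4 a b c d)"
proof -
  have "is_kform (1 + (1 + (1 + 1))) (mono4 a b c d)"
    unfolding mono4_def using assms by (intro is_kform_wedge is_kform_bas)
  then show ?thesis by (simp add: eval_nat_numeral)
qed

lemma is_kform_Omega: "is_kform 4 Omega"
  unfolding Omega_def by (intro is_kform_fadd is_kform_fsub is_kform_fscale is_kform_mono4) auto

lemma is_kform_Pplus:
  assumes "is_kform 2 \<phi>"
  shows "is_kform 2 (Pplus \<phi>)"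
proof -
  have "is_kform (8 - (4 + 2)) (hodge (Omega \<and>\<^sub>w \<phi>))"
    using is_kform_Omega assms by (intro is_kform_hodge is_kform_wedge)
  then show ?thesis
    unfolding Pplus_def using assms by (intro is_kform_fscale is_kform_fadd) simp_all
qed

lemma two_form_eqI:
  assumes "is_kform 2 a" "is_kform 2 b"
    and pairs: "\<And>i j. i \<in> {1..8} \<Longrightarrow> j \<in> {1..8} \<Longrightarrow> i < j \<Longrightarrow> a {i, j} = b {i, j}"
  shows "a = b"
proof
  fix S
  show "a S = b S"
  proof (cases "S \<subseteq> {1..8} \<and> card S = 2")
    case True
    then obtain i j where "S = {i, j}" "i \<noteq> j"
      by (auto simp: card_2_iff)
    with True pairs[of i j] pairs[of j i] show ?thesis
      by (cases "i < j") (auto simp: insert_commute)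
  next
    case False
    with assms(1,2) have "a S = 0" "b S = 0"
      unfolding is_kform_def by blast+
    then show ?thesis by simp
  qed
qed

lemma Lambda2_plus_eigen:
  assumes "\<phi> \<in> Lambda2_plus"
  shows "hodge (Omega \<and>\<^sub>w \<phi>) S = 3 * \<phi> S"
proof -
  have "((3 *\<^sub>f \<phi>) -\<^sub>f hodge (Omega \<and>\<^sub>w \<phi>)) S = fzero S"
    using assms unfolding Lambda2_plus_def by simp
  then show ?thesis unfolding fscale_def fsub_def fzero_def by simp
qed

lemma Lambda2_plus_coeffs:
  assumes "\<phi> \<in> Lambda2_plus"
  shows "\<phi> {3,4} = \<phi> {1,2}" "\<phi> {5,6} = - \<phi> {1,2}" "\<phi> {7,8} = - \<phi> {1,2}"
    and "\<phi> {2,4} = - \<phi> {1,3}" "\<phi> {5,7} = - \<phi> {1,3}" "\<phi> {6,8} = \<phi> {1,3}"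
    and "\<phi> {2,3} = \<phi> {1,4}" "\<phi> {5,8} = - \<phi> {1,4}" "\<phi> {6,7} = - \<phi> {1,4}"
    and "\<phi> {2,6} = \<phi> {1,5}" "\<phi> {3,7} = \<phi> {1,5}" "\<phi> {4,8} = \<phi> {1,5}"
    and "\<phi> {2,5} = - \<phi> {1,6}" "\<phi> {3,8} = - \<phi> {1,6}" "\<phi> {4,7} = \<phi> {1,6}"
    and "\<phi> {2,8} = \<phi> {1,7}" "\<phi> {3,5} = - \<phi> {1,7}" "\<phi> {4,6} = - \<phi> {1,7}"
    and "\<phi> {2,7} = - \<phi> {1,8}" "\<phi> {3,6} = \<phi> {1,8}" "\<phi> {4,5} = - \<phi> {1,8}"
proof -
  note eigen = Lambda2_plus_eigen[OF assms]
  show "\<phi> {3,4} = \<phi> {1,2}" "\<phi> {5,6} = - \<phi> {1,2}" "\<phi> {7,8} = - \<phi> {1,2}"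
    using eigen[of "{1,2}"] eigen[of "{3,4}"] eigen[of "{5,6}"] eigen[of "{7,8}"]
    unfolding hodge_Omega_wedge by linarith+
  show "\<phi> {2,4} = - \<phi> {1,3}" "\<phi> {5,7} = - \<phi> {1,3}" "\<phi> {6,8} = \<phi> {1,3}"
    using eigen[of "{1,3}"] eigen[of "{2,4}"] eigen[of "{5,7}"] eigen[of "{6,8}"]
    unfolding hodge_Omega_wedge by linarith+
  show "\<phi> {2,3} = \<phi> {1,4}" "\<phi> {5,8} = - \<phi> {1,4}" "\<phi> {6,7} = - \<phi> {1,4}"
    using eigen[of "{1,4}"] eigen[of "{2,3}"] eigen[of "{5,8}"] eigen[of "{6,7}"]
    unfolding hodge_Omega_wedge by linarith+
  show "\<phi> {2,6} = \<phi> {1,5}" "\<phi> {3,7} = \<phi> {1,5}" "\<phi> {4,8} = \<phi> {1,5}"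
    using eigen[of "{1,5}"] eigen[of "{2,6}"] eigen[of "{3,7}"] eigen[of "{4,8}"]
    unfolding hodge_Omega_wedge by linarith+
  show "\<phi> {2,5} = - \<phi> {1,6}" "\<phi> {3,8} = - \<phi> {1,6}" "\<phi> {4,7} = \<phi> {1,6}"
    using eigen[of "{1,6}"] eigen[of "{2,5}"] eigen[of "{3,8}"] eigen[of "{4,7}"]
    unfolding hodge_Omega_wedge by linarith+
  show "\<phi> {2,8} = \<phi> {1,7}" "\<phi> {3,5} = - \<phi> {1,7}" "\<phi> {4,6} = - \<phi> {1,7}"
    using eigen[of "{1,7}"] eigen[of "{2,8}"] eigen[of "{3,5}"] eigen[of "{4,6}"]
    unfolding hodge_Omega_wedge by linarith+
  show "\<phi> {2,7} = - \<phi> {1,8}" "\<phi> {3,6} = \<phi> {1,8}" "\<phi> {4,5} = - \<phi> {1,8}"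
    using eigen[of "{1,8}"] eigen[of "{2,7}"] eigen[of "{3,6}"] eigen[of "{4,5}"]
    unfolding hodge_Omega_wedge by linarith+
qed

definition sym_derivation :: "nat \<Rightarrow> nat \<Rightarrow> form \<Rightarrow> form" where
  "sym_derivation k l \<phi> = (bas k \<and>\<^sub>w interior l \<phi>) +\<^sub>f (bas l \<and>\<^sub>w interior k \<phi>)"

lemma is_kform_sym_derivation:
  assumes "is_kform 2 \<phi>" "k \<in> {1..8}" "l \<in> {1..8}"
  shows "is_kform 2 (sym_derivation k l \<phi>)"
proof -
  have interior: "is_kform 1 (interior j \<phi>)" for j
    using is_kform_interior[of 1 \<phi>] assms(1) by (simp add: numeral_2_eq_2)
  have "is_kform 2 (bas i \<and>\<^sub>w interior j \<phi>)" if "i \<in> {1..8}" for i j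
    using is_kform_wedge[OF is_kform_bas[OF that] interior] unfolding one_add_one .
  then show ?thesis
    unfolding sym_derivation_def using assms(2,3) by (intro is_kform_fadd) simp_all
qed

definition skew_coeff :: "form \<Rightarrow> nat \<Rightarrow> nat \<Rightarrow> real" where
  "skew_coeff \<phi> a b = (if a < b then \<phi> {a, b} else if b < a then - \<phi> {b, a} else 0)"

lemma interior_singleton: "interior l \<phi> {b} = skew_coeff \<phi> l b"
proof -
  have "{t \<in> {b}. t < l} = (if b < l then {b} else {})" by auto
  then show ?thesis unfolding interior_def skew_coeff_def by (auto simp: insert_commute)
qed

lemma bas_wedge_pair:
  assumes "a < b"
  shows "(bas k \<and>\<^sub>w y) {a, b} = (if k = a then y {b} else 0) - (if k = b then y {a} else 0)"
proof -
  have "{k} \<subseteq> {a, b} \<longleftrightarrow> k = a \<or> k = b" by auto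
  moreover have "k = a \<Longrightarrow> {a, b} - {k} = {b}" "k = b \<Longrightarrow> {a, b} - {k} = {a}"
    using assms by auto
  ultimately show ?thesis
    using assms unfolding bas_eq_monomial wedge_monomial_left by (auto simp: shuffle_sign_eq_sum)
qed

lemma sym_derivation_pair:
  assumes "a < b"
  shows "sym_derivation k l \<phi> {a, b} =
      (if k = a then skew_coeff \<phi> l b else 0) - (if k = b then skew_coeff \<phi> l a else 0)
    + (if l = a then skew_coeff \<phi> k b else 0) - (if l = b then skew_coeff \<phi> k a else 0)"
  unfolding sym_derivation_def fadd_def using assms by (simp add: bas_wedge_pair interior_singleton)

lemma Pplus_apply: "Pplus x S = (x S + hodge (Omega \<and>\<^sub>w x) S) / 4"
  unfolding Pplus_def fscale_def fadd_def by simp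

lemma two_Pplus_sym_derivation_pair:
  assumes "\<phi> \<in> Lambda2_plus" "i \<in> {1..8}" "j \<in> {1..8}" "i < j" "k \<in> {1..8}" "l \<in> {1..8}"
  shows "2 * Pplus (sym_derivation k l \<phi>) {i, j} = (if k = l then 1 else 0) * \<phi> {i, j}"
  using assms(2-) unfolding atLeastAtMost_1_8 Pplus_apply
  (* One_nat_def would rewrite the numeral 1 to Suc 0 before the table hodge_Omega_wedge,
     which is stated with numerals, gets a chance to fire. *)
  by (elim insertE emptyE)
    (simp_all add: hodge_Omega_wedge sym_derivation_pair skew_coeff_def
      Lambda2_plus_coeffs[OF assms(1)] del: One_nat_def)

theorem lemma2p1:
  fixes \<phi> :: form and k l :: nat
  assumes "\<phi> \<in> Lambda2_plus" and "k \<in> {1..8}" and "l \<in> {1..8}"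
  shows "2 *\<^sub>f Pplus ((bas k \<and>\<^sub>w interior l \<phi>) +\<^sub>f (bas l \<and>\<^sub>w interior k \<phi>))
         = (if k = l then 1 else 0) *\<^sub>f \<phi>"
proof -
  have "is_kform 2 \<phi>"
    using assms(1) unfolding Lambda2_plus_def by simp
  then have "is_kform 2 (2 *\<^sub>f Pplus (sym_derivation k l \<phi>))"
    using assms(2,3) by (intro is_kform_fscale is_kform_Pplus is_kform_sym_derivation)
  moreover have "is_kform 2 ((if k = l then 1 else 0) *\<^sub>f \<phi>)"
    using \<open>is_kform 2 \<phi>\<close> by (rule is_kform_fscale)
  ultimately have "2 *\<^sub>f Pplus (sym_derivation k l \<phi>) = (if k = l then 1 else 0) *\<^sub>f \<phi>"
    by (rule two_form_eqI)
      (simp add: fscale_def two_Pplus_sym_derivation_pair[OF assms(1) _ _ _ assms(2,3)])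
  then show ?thesis
    unfolding sym_derivation_def .
qed

end
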